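(* Let $(L,[\cdot,\cdot],\{\cdot,\cdot,\cdot\},\alpha)$ be a Hom-Lie-Yamaguti algebra over a field $\mathbb{K}$. Then the coboundary operators are well defined, i.e.: (1) if $f\in HomC^1(L,L)$, then $\delta_I^1 f\in HomC^2(L,L)$ and $\delta_{II}^1 f\in HomC^3(L,L)$; (2) if $(f,g)\in HomC^2(L,L)\times HomC^3(L,L)$, then $\delta_I^2(f,g)\in HomC^4(L,L)$ and $\delta_{II}^2 g\in HomC^5(L,L)$; (3) if $(f,g)\in HomC^4(L,L)\times HomC^5(L,L)$, then $\delta_I^3(f,g)\in HomC^6(L,L)$ and $\delta_{II}^3 g\in HomC^7(L,L)$.
   Context: A Hom-Lie-Yamaguti algebra (HLYA) is a quadruple $(L,[\cdot,\cdot],\{\cdot,\cdot,\cdot\},\alpha)$ where $L$ is a vector space over a field $\mathbb{K}$, $[\cdot,\cdot]$ is a bilinear and $\{\cdot,\cdot,\cdot\}$ a trilinear operation on $L$ (written $[xy]$, $\{xyz\}$), and $\alpha:L\to L$ is linear, such that for all $x,y,z,u,v\in L$: $\alpha([xy])=[\alpha(x)\alpha(y)]$; $\alpha(\{xyz\})=\{\alpha(x)\alpha(y)\alpha(z)\}$; $[xx]=0$; $\{xxy\}=0$; $\circlearrowleft_{x,y,z}([[xy]\alpha(z)]+\{xyz\})=0$; $\circlearrowleft_{x,y,z}\{[xy]\alpha(z)\alpha(u)\}=0$; $\{\alpha(x)\alpha(y)[uv]\}=[\{xyu\}\alpha^2(v)]+[\alpha^2(u)\{xyv\}]$; $\{\alpha^2(u)\alpha^2(v)\{xyz\}\}=\{\{uvx\}\alpha^2(y)\alpha^2(z)\}+\{\alpha^2(x)\{uvy\}\alpha^2(z)\}+\{\alpha^2(x)\alpha^2(y)\{uvz\}\}$.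 Here $\circlearrowleft_{x,y,z}$ denotes the sum over cyclic permutations of $x,y,z$. For $n\ge1$, $HomC^n(L,L)$ is the set of $n$-linear maps $f:L^n\to L$ such that $f(x_1,\dots,x_n)=0$ whenever $x_{2i-1}=x_{2i}$ for some $i$ (with $2i\le n$), and $f(\alpha(x_1),\dots,\alpha(x_n))=\alpha(f(x_1,\dots,x_n))$. Coboundary operators: For $f\in HomC^1(L,L)$: $\delta_I^1 f(x,y)=[xf(y)]+[f(x)y]-f([xy])$, $\delta_{II}^1 f(x,y,z)=\{f(x)yz\}+\{xf(y)z\}+\{xyf(z)\}-f(\{xyz\})$. For $f\in HomC^2(L,L)$, $g\in HomC^3(L,L)$: $\delta_I^2(f,g)(x,y,z,u)=\{\alpha(x)\alpha(y)f(z,u)\}-f(\{xyz\},\alpha^2(u))-f(\alpha^2(z),\{xyu\})+g(\alpha(x),\alpha(y),[zu])-[\alpha^2(z)g(x,y,u)]-[g(x,y,z)\alpha^2(u)]$, and $\delta_{II}^2 g(x,y,u,v,w)=\{\alpha^2(x)\alpha^2(y)g(u,v,w)\}-\{g(x,y,u)\alpha^2(v)\alpha^2(w)\}-\{\alpha^2(u)g(x,y,v)\alpha^2(w)\}-\{\alpha^2(u)\alpha^2(v)g(x,y,w)\}+g(\alpha^2(x),\alpha^2(y),\{uvw\})-g(\{xyu\},\alpha^2(v),\alpha^2(w))-g(\alpha^2(u),\{xyv\},\alpha^2(w))-g(\alpha^2(u),\alpha^2(v),\{xyw\})$. For $f\in HomC^4(L,L)$, $g\in HomC^5(L,L)$: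 $\delta_I^3(f,g)(x_1,\dots,x_6)=\{\alpha^3(x_1)\alpha^3(x_2)f(x_3,x_4,x_5,x_6)\}-\{\alpha^3(x_3)\alpha^3(x_4)f(x_1,x_2,x_5,x_6)\}+\sum_{k=1}^2\sum_{i=2k+1}^6(-1)^k f(\alpha^2(x_1),\dots,\widehat{\alpha^2(x_{2k-1})},\widehat{\alpha^2(x_{2k})},\dots,\{x_{2k-1}x_{2k}x_i\},\dots,\alpha^2(x_6))-g(\alpha(x_1),\dots,\alpha(x_4),[x_5x_6])+[\alpha^4(x_5)g(x_1,\dots,x_4,x_6)]+[g(x_1,\dots,x_5)\alpha^4(x_6)]$, $\delta_{II}^3 g(x_1,\dots,x_7)=\sum_{k=1}^3(-1)^{k+1}\{\alpha^4(x_{2k-1})\alpha^4(x_{2k})g(x_1,\dots,\widehat{x_{2k-1}},\widehat{x_{2k}},\dots,x_7)\}+\sum_{k=1}^3\sum_{i=2k+1}^7(-1)^k g(\alpha^2(x_1),\dots,\widehat{\alpha^2(x_{2k-1})},\widehat{\alpha^2(x_{2k})},\dots,\{x_{2k-1}x_{2k}x_i\},\dots,\alpha^2(x_7))+\{g(x_1,\dots,x_5)\alpha^4(x_6)\alpha^4(x_7)\}-\{g(x_1,\dots,x_4,x_6)\alpha^4(x_5)\alpha^4(x_7)\}$. A hat means the entry is omitted; in the double sums the arguments are $\alpha^2(x_j)$ for all $j\notin\{2k-1,2k\}$ in increasing order, except that the entry in position of $x_i$ is replaced by $\{x_{2k-1}x_{2k}x_i\}$. *)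

theory Defs
  imports Complex_Main
begin

text \<open>The underlying vector space L over a field K is given by a scalar multiplication
  scale :: K => L => L satisfying the vector_space locale axioms. n-linear maps
  L^n -> L are represented as functions on lists of length n (values on lists of
  other lengths are irrelevant). Positions are 1-based in the comments, 0-based in lists.\<close>

definition multilin :: "('k::field \<Rightarrow> 'v::ab_group_add \<Rightarrow> 'v) \<Rightarrow> nat \<Rightarrow> ('v list \<Rightarrow> 'v) \<Rightarrow> bool" where
  "multilin scale n f \<longleftrightarrow>
     (\<forall>xs i. length xs = n \<and> i < n \<longrightarrow> Vector_Spaces.linear scale scale (\<lambda>y. f (xs[i := y])))"

definition HomC :: "('k::field \<Rightarrow> 'v::ab_group_add \<Rightarrow> 'v) \<Rightarrow> ('v \<Rightarrow> 'v) \<Rightarrow> nat \<Rightarrow> ('v list \<Rightarrow> 'v) \<Rightarrow> bool" where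
  "HomC scale \<alpha> n f \<longleftrightarrow>
     multilin scale n f
   \<and> (\<forall>xs i. length xs = n \<and> 2 * i + 1 < n \<and> xs ! (2 * i) = xs ! (2 * i + 1) \<longrightarrow> f xs = 0)
   \<and> (\<forall>xs. length xs = n \<longrightarrow> f (map \<alpha> xs) = \<alpha> (f xs))"

definition HLYA :: "('k::field \<Rightarrow> 'v::ab_group_add \<Rightarrow> 'v) \<Rightarrow> ('v \<Rightarrow> 'v \<Rightarrow> 'v)
    \<Rightarrow> ('v \<Rightarrow> 'v \<Rightarrow> 'v \<Rightarrow> 'v) \<Rightarrow> ('v \<Rightarrow> 'v) \<Rightarrow> bool" where
  "HLYA scale br tri \<alpha> \<longleftrightarrow>
     vector_space scale
   \<and> Vector_Spaces.linear scale scale \<alpha>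
   \<and> multilin scale 2 (\<lambda>xs. br (xs!0) (xs!1))
   \<and> multilin scale 3 (\<lambda>xs. tri (xs!0) (xs!1) (xs!2))
   \<and> (\<forall>x y. \<alpha> (br x y) = br (\<alpha> x) (\<alpha> y))
   \<and> (\<forall>x y z. \<alpha> (tri x y z) = tri (\<alpha> x) (\<alpha> y) (\<alpha> z))
   \<and> (\<forall>x. br x x = 0)
   \<and> (\<forall>x y. tri x x y = 0)
   \<and> (\<forall>x y z. (br (br x y) (\<alpha> z) + tri x y z) + (br (br y z) (\<alpha> x) + tri y z x)
               + (br (br z x) (\<alpha> y) + tri z x y) = 0)
   \<and> (\<forall>x y z u. tri (br x y) (\<alpha> z) (\<alpha> u) + tri (br y z) (\<alpha> x) (\<alpha> u)
               + tri (br z x) (\<alpha> y) (\<alpha> u) = 0)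
   \<and> (\<forall>x y u v. tri (\<alpha> x) (\<alpha> y) (br u v)
               = br (tri x y u) ((\<alpha>^^2) v) + br ((\<alpha>^^2) u) (tri x y v))
   \<and> (\<forall>x y z u v. tri ((\<alpha>^^2) u) ((\<alpha>^^2) v) (tri x y z)
               = tri (tri u v x) ((\<alpha>^^2) y) ((\<alpha>^^2) z)
               + tri ((\<alpha>^^2) x) (tri u v y) ((\<alpha>^^2) z)
               + tri ((\<alpha>^^2) x) ((\<alpha>^^2) y) (tri u v z))"

definition sgnk :: "nat \<Rightarrow> 'v::ab_group_add \<Rightarrow> 'v" where
  "sgnk k v = (if even k then v else - v)"

text \<open>Argument list of the double sums: entries 2k-1, 2k (1-based) removed, alpha^2 applied
  to all others except entry i, which is replaced by {x_(2k-1) x_(2k) x_i}.\<close>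
definition dsub :: "('v \<Rightarrow> 'v \<Rightarrow> 'v \<Rightarrow> 'v) \<Rightarrow> ('v \<Rightarrow> 'v) \<Rightarrow> 'v list \<Rightarrow> nat \<Rightarrow> nat \<Rightarrow> 'v list" where
  "dsub tri \<alpha> xs k i =
     [ (if j = i then tri (xs ! (2*k-2)) (xs ! (2*k-1)) (xs ! (j-1)) else (\<alpha>^^2) (xs ! (j-1))).
       j \<leftarrow> [1..<length xs + 1], j \<noteq> 2*k-1 \<and> j \<noteq> 2*k ]"

definition drop2 :: "'v list \<Rightarrow> nat \<Rightarrow> 'v list" where
  "drop2 xs k = [ xs ! (j-1). j \<leftarrow> [1..<length xs + 1], j \<noteq> 2*k-1 \<and> j \<noteq> 2*k ]"

definition deltaI1 :: "('v::ab_group_add \<Rightarrow> 'v \<Rightarrow> 'v) \<Rightarrow> ('v list \<Rightarrow> 'v) \<Rightarrow> 'v list \<Rightarrow> 'v" where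
  "deltaI1 br f xs = br (xs!0) (f [xs!1]) + br (f [xs!0]) (xs!1) - f [br (xs!0) (xs!1)]"

definition deltaII1 :: "('v::ab_group_add \<Rightarrow> 'v \<Rightarrow> 'v \<Rightarrow> 'v) \<Rightarrow> ('v list \<Rightarrow> 'v) \<Rightarrow> 'v list \<Rightarrow> 'v" where
  "deltaII1 tri f xs = tri (f [xs!0]) (xs!1) (xs!2) + tri (xs!0) (f [xs!1]) (xs!2)
      + tri (xs!0) (xs!1) (f [xs!2]) - f [tri (xs!0) (xs!1) (xs!2)]"

definition deltaI2 :: "('v::ab_group_add \<Rightarrow> 'v \<Rightarrow> 'v) \<Rightarrow> ('v \<Rightarrow> 'v \<Rightarrow> 'v \<Rightarrow> 'v) \<Rightarrow> ('v \<Rightarrow> 'v)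
    \<Rightarrow> ('v list \<Rightarrow> 'v) \<Rightarrow> ('v list \<Rightarrow> 'v) \<Rightarrow> 'v list \<Rightarrow> 'v" where
  "deltaI2 br tri \<alpha> f g xs =
     (let x = xs!0; y = xs!1; z = xs!2; u = xs!3 in
        tri (\<alpha> x) (\<alpha> y) (f [z, u]) - f [tri x y z, (\<alpha>^^2) u] - f [(\<alpha>^^2) z, tri x y u]
      + g [\<alpha> x, \<alpha> y, br z u] - br ((\<alpha>^^2) z) (g [x, y, u]) - br (g [x, y, z]) ((\<alpha>^^2) u))"

definition deltaII2 :: "('v::ab_group_add \<Rightarrow> 'v \<Rightarrow> 'v \<Rightarrow> 'v) \<Rightarrow> ('v \<Rightarrow> 'v)
    \<Rightarrow> ('v list \<Rightarrow> 'v) \<Rightarrow> 'v list \<Rightarrow> 'v" where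
  "deltaII2 tri \<alpha> g xs =
     (let x = xs!0; y = xs!1; u = xs!2; v = xs!3; w = xs!4; a2 = \<alpha>^^2 in
        tri (a2 x) (a2 y) (g [u, v, w]) - tri (g [x, y, u]) (a2 v) (a2 w)
      - tri (a2 u) (g [x, y, v]) (a2 w) - tri (a2 u) (a2 v) (g [x, y, w])
      + g [a2 x, a2 y, tri u v w] - g [tri x y u, a2 v, a2 w]
      - g [a2 u, tri x y v, a2 w] - g [a2 u, a2 v, tri x y w])"

definition deltaI3 :: "('v::ab_group_add \<Rightarrow> 'v \<Rightarrow> 'v) \<Rightarrow> ('v \<Rightarrow> 'v \<Rightarrow> 'v \<Rightarrow> 'v) \<Rightarrow> ('v \<Rightarrow> 'v)
    \<Rightarrow> ('v list \<Rightarrow> 'v) \<Rightarrow> ('v list \<Rightarrow> 'v) \<Rightarrow> 'v list \<Rightarrow> 'v" where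
  "deltaI3 br tri \<alpha> f g xs =
     (let x = (\<lambda>j. xs ! (j - 1)) in
        tri ((\<alpha>^^3) (x 1)) ((\<alpha>^^3) (x 2)) (f [x 3, x 4, x 5, x 6])
      - tri ((\<alpha>^^3) (x 3)) ((\<alpha>^^3) (x 4)) (f [x 1, x 2, x 5, x 6])
      + (\<Sum>k\<in>{1..2}. \<Sum>i\<in>{2*k+1..6}. sgnk k (f (dsub tri \<alpha> xs k i)))
      - g [\<alpha> (x 1), \<alpha> (x 2), \<alpha> (x 3), \<alpha> (x 4), br (x 5) (x 6)]
      + br ((\<alpha>^^4) (x 5)) (g [x 1, x 2, x 3, x 4, x 6])
      + br (g [x 1, x 2, x 3, x 4, x 5]) ((\<alpha>^^4) (x 6)))"

definition deltaII3 :: "('v::ab_group_add \<Rightarrow> 'v \<Rightarrow> 'v \<Rightarrow> 'v) \<Rightarrow> ('v \<Rightarrow> 'v)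
    \<Rightarrow> ('v list \<Rightarrow> 'v) \<Rightarrow> 'v list \<Rightarrow> 'v" where
  "deltaII3 tri \<alpha> g xs =
     (let x = (\<lambda>j. xs ! (j - 1)) in
        (\<Sum>k\<in>{1..3}. sgnk (k + 1) (tri ((\<alpha>^^4) (x (2*k-1))) ((\<alpha>^^4) (x (2*k))) (g (drop2 xs k))))
      + (\<Sum>k\<in>{1..3}. \<Sum>i\<in>{2*k+1..7}. sgnk k (g (dsub tri \<alpha> xs k i)))
      + tri (g [x 1, x 2, x 3, x 4, x 5]) ((\<alpha>^^4) (x 6)) ((\<alpha>^^4) (x 7))
      - tri (g [x 1, x 2, x 3, x 4, x 6]) ((\<alpha>^^4) (x 5)) ((\<alpha>^^4) (x 7)))"

end

theory Submission
  imports Defs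
begin

text \<open>Each coboundary is a signed sum of terms in which every argument occurs exactly once,
  inside a composite of multilinear maps commuting with \<open>\<alpha>\<close> (the bracket, the triple product,
  \<open>\<alpha>\<close>, \<open>f\<close> and \<open>g\<close>); hence it is again multilinear and commutes with \<open>\<alpha>\<close>.  When two paired
  arguments coincide, each term either feeds them into a paired slot of one of these maps and
  vanishes, or it comes with a partner term differing only by the order of a paired slot, and the
  two cancel by skew-symmetry, a consequence of alternation and bilinearity.\<close>

lemma multilin_slot:
  assumes "multilin s n f" "length xs = n" "i < n"
  shows "f (xs[i := a + b]) = f (xs[i := a]) + f (xs[i := b])"
    and "f (xs[i := s c a]) = s c (f (xs[i := a]))"
    and "f (xs[i := 0]) = 0"
    and "f (xs[i := - a]) = - f (xs[i := a])"
    and "f (xs[i := a - b]) = f (xs[i := a]) - f (xs[i := b])"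
proof -
  interpret module_hom s s "\<lambda>y. f (xs[i := y])"
    using assms by (simp add: multilin_def module_hom_iff_linear)
  show "f (xs[i := a + b]) = f (xs[i := a]) + f (xs[i := b])"
    and "f (xs[i := s c a]) = s c (f (xs[i := a]))"
    and "f (xs[i := 0]) = 0"
    and "f (xs[i := - a]) = - f (xs[i := a])"
    and "f (xs[i := a - b]) = f (xs[i := a]) - f (xs[i := b])"
    by (simp_all only: add scale zero neg diff)
qed

lemma multilin_swap_adjacent:
  assumes f: "multilin s n f" and len: "length xs = n" and i: "Suc i < n"
    and alt: "\<And>ys. length ys = n \<Longrightarrow> ys ! i = ys ! Suc i \<Longrightarrow> f ys = 0"
  shows "f (xs[i := b, Suc i := a]) = - f (xs[i := a, Suc i := b])"
proof -
  define F where "F u v = f (xs[i := u, Suc i := v])" for u v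
  have add_left: "F (u + u') v = F u v + F u' v" for u u' v
    using multilin_slot(1)[OF f, of "xs[Suc i := v]" i] len i
    by (simp add: F_def list_update_swap)
  have add_right: "F u (v + v') = F u v + F u v'" for u v v'
    using multilin_slot(1)[OF f, of "xs[i := u]" "Suc i"] len i by (simp add: F_def)
  have diag: "F u u = 0" for u
    unfolding F_def using len i by (intro alt) auto
  have "0 = F (a + b) (a + b)" by (simp only: diag)
  also have "\<dots> = F a b + F b a" unfolding add_left add_right by (simp add: diag)
  finally show ?thesis
    unfolding F_def by (simp add: eq_neg_iff_add_eq_0 add.commute)
qed

lemma funpow_numeral_apply: "(f ^^ numeral k) x = f ((f ^^ pred_numeral k) x)"
  by (simp add: numeral_eq_Suc)

lemma all_less_numeral: "(\<forall>i < numeral k. P i) \<longleftrightarrow> P 0 \<and> (\<forall>i < pred_numeral k. P (Suc i))"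
  by (simp add: numeral_eq_Suc All_less_Suc2)

lemma length_eq_numeral_iff:
  "length xs = numeral k \<longleftrightarrow> (\<exists>y ys. xs = y # ys \<and> length ys = pred_numeral k)"
  by (simp add: numeral_eq_Suc length_Suc_conv)

lemma HomC_multilin: "HomC s \<alpha> n f \<Longrightarrow> multilin s n f"
  by (simp add: HomC_def)

lemma HomC_vanishes_on_pair:
  "HomC s \<alpha> n f \<Longrightarrow> length xs = n \<Longrightarrow> 2 * i + 1 < n \<Longrightarrow> xs ! (2 * i) = xs ! (2 * i + 1) \<Longrightarrow> f xs = 0"
  unfolding HomC_def by blast

lemma HomC_map:
  "HomC s \<alpha> n f \<Longrightarrow> length xs = n \<Longrightarrow> f (map \<alpha> xs) = \<alpha> (f xs)"
  by (simp add: HomC_def)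

lemma HomC_swap_pair:
  assumes "HomC s \<alpha> n f" "length xs = n" "2 * i + 1 < n"
  shows "f (xs[2 * i := b, 2 * i + 1 := a]) = - f (xs[2 * i := a, 2 * i + 1 := b])"
proof -
  have "f ys = 0" if "length ys = n" "ys ! (2 * i) = ys ! Suc (2 * i)" for ys
    using HomC_vanishes_on_pair[OF assms(1) that(1) assms(3)] that(2) by (metis Suc_eq_plus1)
  from multilin_swap_adjacent[OF HomC_multilin[OF assms(1)] assms(2) _ this] assms(3)
  show ?thesis by (metis Suc_eq_plus1)
qed

lemma HomC_intro:
  assumes "vector_space s"
    and multilinear: "\<And>xs a b c. length xs = n \<Longrightarrow> \<forall>i<n.
           F (xs[i := a + b]) = F (xs[i := a]) + F (xs[i := b]) \<and> F (xs[i := s c a]) = s c (F (xs[i := a]))"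
    and alternating: "\<And>xs. length xs = n \<Longrightarrow> \<forall>i < n div 2. xs ! (2 * i) = xs ! (2 * i + 1) \<longrightarrow> F xs = 0"
    and map: "\<And>xs. length xs = n \<Longrightarrow> F (map \<alpha> xs) = \<alpha> (F xs)"
  shows "HomC s \<alpha> n F"
proof -
  have "multilin s n F"
    unfolding multilin_def Vector_Spaces.linear_iff using assms(1) multilinear by simp
  moreover have "F xs = 0" if "length xs = n" "2 * i + 1 < n" "xs ! (2 * i) = xs ! (2 * i + 1)" for xs i
  proof -
    have "i < n div 2" using that(2) by presburger
    then show ?thesis using alternating[of xs] that by blast
  qed
  ultimately show ?thesis
    using map unfolding HomC_def by blast
qed

locale hom_lie_yamaguti =
  fixes scale :: "'k::field \<Rightarrow> 'v::ab_group_add \<Rightarrow> 'v"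
    and br :: "'v \<Rightarrow> 'v \<Rightarrow> 'v"
    and tri :: "'v \<Rightarrow> 'v \<Rightarrow> 'v \<Rightarrow> 'v"
    and \<alpha> :: "'v \<Rightarrow> 'v"
  assumes HLYA: "HLYA scale br tri \<alpha>"
begin

lemma vector_space: "vector_space scale"
  and alpha_linear: "Vector_Spaces.linear scale scale \<alpha>"
  and bracket_multilin: "multilin scale 2 (\<lambda>xs. br (xs ! 0) (xs ! 1))"
  and triple_multilin: "multilin scale 3 (\<lambda>xs. tri (xs ! 0) (xs ! 1) (xs ! 2))"
  and alpha_bracket: "\<alpha> (br x y) = br (\<alpha> x) (\<alpha> y)"
  and alpha_triple: "\<alpha> (tri x y z) = tri (\<alpha> x) (\<alpha> y) (\<alpha> z)"
  and bracket_self: "br x x = 0"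
  and triple_self: "tri x x z = 0"
  using HLYA by (simp_all add: HLYA_def)

lemma module: "module scale"
  using vector_space by (simp add: module_iff_vector_space)

lemma alpha_hom: "module_hom scale scale \<alpha>"
  using alpha_linear by (simp add: module_hom_iff_linear)

lemmas scale_simps =
  module.scale_right_distrib[OF module] module.scale_right_diff_distrib[OF module]
  module.scale_minus_right[OF module] module.scale_zero_right[OF module]

lemmas alpha_simps =
  module_hom.add[OF alpha_hom] module_hom.scale[OF alpha_hom] module_hom.diff[OF alpha_hom]
  module_hom.neg[OF alpha_hom] module_hom.zero[OF alpha_hom] alpha_bracket alpha_triple

lemmas bracket_slot =
  multilin_slot[OF bracket_multilin, where xs = "[x, y]" and i = 0 for x y, simplified]
  multilin_slot[OF bracket_multilin, where xs = "[x, y]" and i = 1 for x y, simplified]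

lemmas triple_slot =
  multilin_slot[OF triple_multilin, where xs = "[x, y, z]" and i = 0 for x y z, simplified]
  multilin_slot[OF triple_multilin, where xs = "[x, y, z]" and i = 1 for x y z, simplified]
  multilin_slot[OF triple_multilin, where xs = "[x, y, z]" and i = 2 for x y z, simplified]

lemma bracket_swap: "br x y = - br y x"
proof -
  have "br (ys ! 0) (ys ! 1) = 0" if "ys ! 0 = ys ! Suc 0" for ys :: "'v list"
    using that bracket_self by (metis One_nat_def)
  from multilin_swap_adjacent[where i = 0, OF bracket_multilin _ _ this,
      where xs = "[y, x]" and b = x and a = y]
  show ?thesis by simp
qed

lemma triple_swap: "tri x y z = - tri y x z"
proof -
  have "tri (ys ! 0) (ys ! 1) (ys ! 2) = 0" if "ys ! 0 = ys ! Suc 0" for ys :: "'v list"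
    using that triple_self by (metis One_nat_def)
  from multilin_swap_adjacent[where i = 0, OF triple_multilin _ _ this,
      where xs = "[y, x, z]" and b = x and a = y]
  show ?thesis by simp
qed

lemmas HomC_slot = multilin_slot[OF HomC_multilin[of scale \<alpha>]]

text \<open>The cochain facts at explicit argument lists, the only form in which the simplifier can
  match them against an unfolded coboundary.\<close>

lemmas cochain_slot =
  HomC_slot[where n = 1 and xs = "[x1]" and i = 0 for x1, simplified]
  HomC_slot[where n = 2 and xs = "[x1, x2]" and i = 0 for x1 x2, simplified]
  HomC_slot[where n = 2 and xs = "[x1, x2]" and i = 1 for x1 x2, simplified]
  HomC_slot[where n = 3 and xs = "[x1, x2, x3]" and i = 0 for x1 x2 x3, simplified]
  HomC_slot[where n = 3 and xs = "[x1, x2, x3]" and i = 1 for x1 x2 x3, simplified]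
  HomC_slot[where n = 3 and xs = "[x1, x2, x3]" and i = 2 for x1 x2 x3, simplified]
  HomC_slot[where n = 4 and xs = "[x1, x2, x3, x4]" and i = 0 for x1 x2 x3 x4, simplified]
  HomC_slot[where n = 4 and xs = "[x1, x2, x3, x4]" and i = 1 for x1 x2 x3 x4, simplified]
  HomC_slot[where n = 4 and xs = "[x1, x2, x3, x4]" and i = 2 for x1 x2 x3 x4, simplified]
  HomC_slot[where n = 4 and xs = "[x1, x2, x3, x4]" and i = 3 for x1 x2 x3 x4, simplified]
  HomC_slot[where n = 5 and xs = "[x1, x2, x3, x4, x5]" and i = 0 for x1 x2 x3 x4 x5, simplified]
  HomC_slot[where n = 5 and xs = "[x1, x2, x3, x4, x5]" and i = 1 for x1 x2 x3 x4 x5, simplified]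
  HomC_slot[where n = 5 and xs = "[x1, x2, x3, x4, x5]" and i = 2 for x1 x2 x3 x4 x5, simplified]
  HomC_slot[where n = 5 and xs = "[x1, x2, x3, x4, x5]" and i = 3 for x1 x2 x3 x4 x5, simplified]
  HomC_slot[where n = 5 and xs = "[x1, x2, x3, x4, x5]" and i = 4 for x1 x2 x3 x4 x5, simplified]

lemmas cochain_map =
  HomC_map[of scale \<alpha>, where n = 1 and xs = "[x1]" for x1, simplified, symmetric]
  HomC_map[of scale \<alpha>, where n = 2 and xs = "[x1, x2]" for x1 x2, simplified, symmetric]
  HomC_map[of scale \<alpha>, where n = 3 and xs = "[x1, x2, x3]" for x1 x2 x3, simplified, symmetric]
  HomC_map[of scale \<alpha>, where n = 4 and xs = "[x1, x2, x3, x4]" for x1 x2 x3 x4, simplified, symmetric]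
  HomC_map[of scale \<alpha>, where n = 5 and xs = "[x1, x2, x3, x4, x5]" for x1 x2 x3 x4 x5, simplified, symmetric]

lemmas cochain_self =
  HomC_vanishes_on_pair[of scale \<alpha>, where n = 2 and xs = "[x, x]" and i = 0 for x, simplified]
  HomC_vanishes_on_pair[of scale \<alpha>, where n = 3 and xs = "[x, x, x3]" and i = 0 for x x3, simplified]
  HomC_vanishes_on_pair[of scale \<alpha>, where n = 4 and xs = "[x, x, x3, x4]" and i = 0 for x x3 x4, simplified]
  HomC_vanishes_on_pair[of scale \<alpha>, where n = 4 and xs = "[x1, x2, x, x]" and i = 1 for x1 x2 x, simplified]
  HomC_vanishes_on_pair[of scale \<alpha>, where n = 5 and xs = "[x, x, x3, x4, x5]" and i = 0 for x x3 x4 x5, simplified]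
  HomC_vanishes_on_pair[of scale \<alpha>, where n = 5 and xs = "[x1, x2, x, x, x5]" and i = 1 for x1 x2 x x5, simplified]

lemmas cochain_swap =
  HomC_swap_pair[of scale \<alpha>, where n = 2 and xs = "[x1, x2]" and i = 0 for x1 x2, simplified]
  HomC_swap_pair[of scale \<alpha>, where n = 3 and xs = "[x1, x2, x3]" and i = 0 for x1 x2 x3, simplified]
  HomC_swap_pair[of scale \<alpha>, where n = 4 and xs = "[x1, x2, x3, x4]" and i = 0 for x1 x2 x3 x4, simplified]
  HomC_swap_pair[of scale \<alpha>, where n = 4 and xs = "[x1, x2, x3, x4]" and i = 1 for x1 x2 x3 x4, simplified]
  HomC_swap_pair[of scale \<alpha>, where n = 5 and xs = "[x1, x2, x3, x4, x5]" and i = 0 for x1 x2 x3 x4 x5, simplified]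
  HomC_swap_pair[of scale \<alpha>, where n = 5 and xs = "[x1, x2, x3, x4, x5]" and i = 1 for x1 x2 x3 x4 x5, simplified]

lemmas cochain_intro = HomC_intro[OF vector_space]

text \<open>Expanding \<open>\<forall>i < n\<close> by \<open>simp only\<close> before anything else is unfolded keeps the
  simplifier from rewriting the coboundary at a symbolic list position.\<close>

lemmas all_less_numeral_unfold = all_less_numeral pred_numeral_simps BitM.simps not_less0 simp_thms

lemmas delta_unfold =
  Let_def dsub_def drop2_def sgnk_def upt_rec sum.atLeast_Suc_atMost funpow_numeral_apply

lemmas multilinear_simps = bracket_slot triple_slot cochain_slot scale_simps alpha_simps

lemma deltaI1_alternating:
  assumes f: "HomC scale \<alpha> 1 f"
  shows "deltaI1 br f [x, x] = 0"
  using f bracket_swap[of "f [x]" x] by (simp add: deltaI1_def bracket_self cochain_slot)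

lemma deltaI1_HomC:
  assumes f: "HomC scale \<alpha> 1 f"
  shows "HomC scale \<alpha> 2 (deltaI1 br f)"
  apply (rule cochain_intro)
  subgoal
    using f
    by (simp only: all_less_numeral_unfold, clarsimp simp: length_eq_numeral_iff length_Suc_conv)
      (simp add: deltaI1_def multilinear_simps algebra_simps)
  subgoal
    using deltaI1_alternating[OF f]
    by (auto simp: length_eq_numeral_iff length_Suc_conv all_less_numeral)
  subgoal
    using f by (clarsimp simp: length_eq_numeral_iff length_Suc_conv) (simp add: deltaI1_def alpha_simps cochain_map)
  done

lemma deltaII1_alternating:
  assumes f: "HomC scale \<alpha> 1 f"
  shows "deltaII1 tri f [x, x, z] = 0"
  using f triple_swap[of "f [x]" x] by (simp add: deltaII1_def triple_self cochain_slot)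

lemma deltaII1_HomC:
  assumes f: "HomC scale \<alpha> 1 f"
  shows "HomC scale \<alpha> 3 (deltaII1 tri f)"
  apply (rule cochain_intro)
  subgoal
    using f
    by (simp only: all_less_numeral_unfold, clarsimp simp: length_eq_numeral_iff length_Suc_conv)
      (simp add: deltaII1_def multilinear_simps algebra_simps)
  subgoal
    using deltaII1_alternating[OF f]
    by (auto simp: length_eq_numeral_iff length_Suc_conv all_less_numeral)
  subgoal
    using f by (clarsimp simp: length_eq_numeral_iff length_Suc_conv) (simp add: deltaII1_def alpha_simps cochain_map)
  done

lemma deltaI2_alternating:
  assumes f: "HomC scale \<alpha> 2 f" and g: "HomC scale \<alpha> 3 g"
  shows "deltaI2 br tri \<alpha> f g [x, x, z, u] = 0"
    and "deltaI2 br tri \<alpha> f g [x, y, z, z] = 0"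
  using f g cochain_swap(1)[OF f, of "\<alpha> (\<alpha> z)" "tri x y z"]
    bracket_swap[of "g [x, y, z]" "\<alpha> (\<alpha> z)"]
  by (simp_all add: deltaI2_def delta_unfold multilinear_simps cochain_self bracket_self triple_self)

lemma deltaI2_HomC:
  assumes f: "HomC scale \<alpha> 2 f" and g: "HomC scale \<alpha> 3 g"
  shows "HomC scale \<alpha> 4 (deltaI2 br tri \<alpha> f g)"
  apply (rule cochain_intro)
  subgoal
    using assms
    by (simp only: all_less_numeral_unfold, clarsimp simp: length_eq_numeral_iff length_Suc_conv)
      (simp add: deltaI2_def delta_unfold multilinear_simps algebra_simps)
  subgoal
    using deltaI2_alternating[OF assms]
    by (auto simp: length_eq_numeral_iff length_Suc_conv all_less_numeral)
  subgoal
    using assms by (clarsimp simp: length_eq_numeral_iff length_Suc_conv) (simp add: deltaI2_def delta_unfold alpha_simps cochain_map)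
  done

lemma deltaII2_alternating:
  assumes g: "HomC scale \<alpha> 3 g"
  shows "deltaII2 tri \<alpha> g [x, x, u, v, w] = 0"
    and "deltaII2 tri \<alpha> g [x, y, z, z, w] = 0"
  using g cochain_swap(2)[OF g, of "\<alpha> (\<alpha> z)" "tri x y z"]
    triple_swap[of "g [x, y, z]" "\<alpha> (\<alpha> z)"]
  by (simp_all add: deltaII2_def delta_unfold multilinear_simps cochain_self triple_self)

lemma deltaII2_HomC:
  assumes g: "HomC scale \<alpha> 3 g"
  shows "HomC scale \<alpha> 5 (deltaII2 tri \<alpha> g)"
  apply (rule cochain_intro)
  subgoal
    using assms
    by (simp only: all_less_numeral_unfold, clarsimp simp: length_eq_numeral_iff length_Suc_conv)
      (simp add: deltaII2_def delta_unfold multilinear_simps algebra_simps)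
  subgoal
    using deltaII2_alternating[OF assms]
    by (auto simp: length_eq_numeral_iff length_Suc_conv all_less_numeral)
  subgoal
    using assms by (clarsimp simp: length_eq_numeral_iff length_Suc_conv) (simp add: deltaII2_def delta_unfold alpha_simps cochain_map)
  done

lemma deltaI3_alternating:
  assumes f: "HomC scale \<alpha> 4 f" and g: "HomC scale \<alpha> 5 g"
  shows "deltaI3 br tri \<alpha> f g [x, x, x3, x4, x5, x6] = 0"
    and "deltaI3 br tri \<alpha> f g [x1, x2, z, z, x5, x6] = 0"
    and "deltaI3 br tri \<alpha> f g [x1, x2, x3, x4, z, z] = 0"
  using f g cochain_swap(3)[OF f, of "\<alpha> (\<alpha> z)" "tri x1 x2 z"]
    cochain_swap(4)[OF f, of "\<alpha> (\<alpha> x1)" "\<alpha> (\<alpha> x2)" "\<alpha> (\<alpha> z)" "tri x3 x4 z"]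
    cochain_swap(4)[OF f, of "\<alpha> (\<alpha> x3)" "\<alpha> (\<alpha> x4)" "\<alpha> (\<alpha> z)" "tri x1 x2 z"]
    bracket_swap[of "g [x1, x2, x3, x4, z]" "\<alpha> (\<alpha> (\<alpha> (\<alpha> z)))"]
  by (simp_all add: deltaI3_def delta_unfold multilinear_simps cochain_self bracket_self triple_self)

lemma deltaI3_HomC:
  assumes f: "HomC scale \<alpha> 4 f" and g: "HomC scale \<alpha> 5 g"
  shows "HomC scale \<alpha> 6 (deltaI3 br tri \<alpha> f g)"
  apply (rule cochain_intro)
  subgoal
    using assms
    by (simp only: all_less_numeral_unfold, clarsimp simp: length_eq_numeral_iff length_Suc_conv)
      (simp add: deltaI3_def delta_unfold multilinear_simps algebra_simps)
  subgoal
    using deltaI3_alternating[OF assms]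
    by (auto simp: length_eq_numeral_iff length_Suc_conv all_less_numeral)
  subgoal
    using assms by (clarsimp simp: length_eq_numeral_iff length_Suc_conv) (simp add: deltaI3_def delta_unfold alpha_simps cochain_map)
  done

lemma deltaII3_alternating:
  assumes g: "HomC scale \<alpha> 5 g"
  shows "deltaII3 tri \<alpha> g [x, x, x3, x4, x5, x6, x7] = 0"
    and "deltaII3 tri \<alpha> g [x1, x2, z, z, x5, x6, x7] = 0"
    and "deltaII3 tri \<alpha> g [x1, x2, x3, x4, z, z, x7] = 0"
  using g cochain_swap(5)[OF g, of "\<alpha> (\<alpha> z)" "tri x1 x2 z"]
    cochain_swap(6)[OF g, of "\<alpha> (\<alpha> x1)" "\<alpha> (\<alpha> x2)" "\<alpha> (\<alpha> z)" "tri x3 x4 z"]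
    cochain_swap(6)[OF g, of "\<alpha> (\<alpha> x3)" "\<alpha> (\<alpha> x4)" "\<alpha> (\<alpha> z)" "tri x1 x2 z"]
  by (simp_all add: deltaII3_def delta_unfold multilinear_simps cochain_self triple_self)

lemma deltaII3_HomC:
  assumes g: "HomC scale \<alpha> 5 g"
  shows "HomC scale \<alpha> 7 (deltaII3 tri \<alpha> g)"
  apply (rule cochain_intro)
  subgoal
    using assms
    by (simp only: all_less_numeral_unfold, clarsimp simp: length_eq_numeral_iff length_Suc_conv)
      (simp add: deltaII3_def delta_unfold multilinear_simps algebra_simps)
  subgoal
    using deltaII3_alternating[OF assms]
    by (auto simp: length_eq_numeral_iff length_Suc_conv all_less_numeral)
  subgoal
    using assms by (clarsimp simp: length_eq_numeral_iff length_Suc_conv) (simp add: deltaII3_def delta_unfold alpha_simps cochain_map)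
  done

end

theorem mainTheorem1:
  fixes scale :: "'k::field \<Rightarrow> 'v::ab_group_add \<Rightarrow> 'v"
    and br :: "'v \<Rightarrow> 'v \<Rightarrow> 'v"
    and tri :: "'v \<Rightarrow> 'v \<Rightarrow> 'v \<Rightarrow> 'v"
    and \<alpha> :: "'v \<Rightarrow> 'v"
  assumes "HLYA scale br tri \<alpha>"
  shows "(\<forall>f. HomC scale \<alpha> 1 f \<longrightarrow>
            HomC scale \<alpha> 2 (deltaI1 br f) \<and> HomC scale \<alpha> 3 (deltaII1 tri f))
       \<and> (\<forall>f g. HomC scale \<alpha> 2 f \<and> HomC scale \<alpha> 3 g \<longrightarrow>
            HomC scale \<alpha> 4 (deltaI2 br tri \<alpha> f g) \<and> HomC scale \<alpha> 5 (deltaII2 tri \<alpha> g))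
       \<and> (\<forall>f g. HomC scale \<alpha> 4 f \<and> HomC scale \<alpha> 5 g \<longrightarrow>
            HomC scale \<alpha> 6 (deltaI3 br tri \<alpha> f g) \<and> HomC scale \<alpha> 7 (deltaII3 tri \<alpha> g))"
proof -
  interpret hom_lie_yamaguti scale br tri \<alpha>
    using assms by unfold_locales
  show ?thesis
    using deltaI1_HomC deltaII1_HomC deltaI2_HomC deltaII2_HomC deltaI3_HomC deltaII3_HomC
    by blast
qed

end
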